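(* Let $\alpha,\beta$ be positive integers, let $a>0$ and $b$ be real numbers, and for each non-negative integer $n$ let $$S_n=\{n\alpha+j\beta : j\in\mathbb{Z}_{\geq0},\ j>an+b\}\subset\mathbb{Z}.$$ Let $g'=\gcd(\alpha,\beta)$ and $B_0=\beta^2(\alpha+a(1+\beta))+\beta$. Then for every $B\geq B_0$, every non-negative integer $n$, and every multiple $M$ of $g'$ with $M\geq\min(S_n)+B$, there is an integer $i$ with $n\leq i<n+\beta(\beta+1)$ such that $M\in S_i$. *)

theory Defs
  imports Complex_Main
begin

definition Sset :: "nat \<Rightarrow> nat \<Rightarrow> real \<Rightarrow> real \<Rightarrow> nat \<Rightarrow> int set" where
  "Sset \<alpha> \<beta> a b n = {int n * int \<alpha> + int j * int \<beta> | j::nat. real j > a * real n + b}"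

end

theory Submission
  imports Defs
begin

text \<open>Write \<open>M = i\<alpha> + q\<beta>\<close> with \<open>i\<close> in the window \<open>n \<le> i < n + \<beta>/gcd \<alpha> \<beta>\<close>: this is possible because
  shifting \<open>(i, q)\<close> by \<open>(\<beta>/g, -\<alpha>/g)\<close> preserves \<open>i\<alpha> + q\<beta>\<close>, so \<open>i\<close> can be any residue class
  modulo \<open>\<beta>/g\<close>. If \<open>min S\<^sub>n = n\<alpha> + j\<^sub>0\<beta>\<close> and \<open>M \<ge> min S\<^sub>n + B\<close>, then \<open>q\<beta> \<ge> j\<^sub>0\<beta> + B - (i - n)\<alpha>\<close>,
  and \<open>B\<close> is large enough to give \<open>q \<ge> j\<^sub>0 + a(i - n) > ai + b\<close>, i.e. \<open>M \<in> S\<^sub>i\<close>.\<close>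

lemma Inf_Sset:
  obtains j0 :: nat where "real j0 > a * real n + b"
    and "Inf (Sset \<alpha> \<beta> a b n) = int n * int \<alpha> + int j0 * int \<beta>"
proof -
  have ex: "\<exists>j::nat. real j > a * real n + b" by (rule reals_Archimedean2)
  define j0 where "j0 = (LEAST j::nat. real j > a * real n + b)"
  have j0: "real j0 > a * real n + b" unfolding j0_def by (rule LeastI_ex[OF ex])
  have "Inf (Sset \<alpha> \<beta> a b n) = int n * int \<alpha> + int j0 * int \<beta>"
  proof (rule cInf_eq_minimum)
    show "int n * int \<alpha> + int j0 * int \<beta> \<in> Sset \<alpha> \<beta> a b n"
      unfolding Sset_def using j0 by blast
  next
    fix s assume "s \<in> Sset \<alpha> \<beta> a b n"
    then obtain j :: nat where s: "s = int n * int \<alpha> + int j * int \<beta>" "real j > a * real n + b"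
      unfolding Sset_def by blast
    have "j0 \<le> j" unfolding j0_def using s(2) by (rule Least_le)
    then show "int n * int \<alpha> + int j0 * int \<beta> \<le> s" using s(1) by (simp add: mult_right_mono)
  qed
  with j0 that show ?thesis by blast
qed

lemma lincomb_first_coeff_in_window:
  fixes \<alpha> \<beta> n :: nat and M :: int
  assumes "\<beta> > 0" and "int (gcd \<alpha> \<beta>) dvd M"
  obtains t :: nat and q :: int
  where "t < \<beta> div gcd \<alpha> \<beta>" and "M = int (n + t) * int \<alpha> + q * int \<beta>"
proof -
  define g where "g = gcd (int \<alpha>) (int \<beta>)"
  obtain u v where uv: "u * int \<alpha> + v * int \<beta> = g" using bezout_int by (metis g_def)
  obtain c where c: "M = g * c" using assms(2) by (auto simp: g_def)
  define x where "x = u * c"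
  have xy: "M = x * int \<alpha> + v * c * int \<beta>" unfolding x_def c uv[symmetric] by (simp add: algebra_simps)
  obtain \<alpha>' \<beta>' where a': "int \<alpha> = g * \<alpha>'" and b': "int \<beta> = g * \<beta>'"
    unfolding g_def by (meson gcd_dvd1 gcd_dvd2 dvdE)
  have "g > 0" using assms(1) by (simp add: g_def)
  then have b'pos: "\<beta>' > 0" using b' assms(1) by (metis of_nat_0_less_iff zero_less_mult_pos)
  define t where "t = (x - int n) mod \<beta>'"
  have t: "0 \<le> t" "t < \<beta>'" unfolding t_def using b'pos by auto
  obtain k where k: "x - (int n + t) = \<beta>' * k"
    unfolding t_def by (metis diff_diff_add dvd_minus_mod dvdE)
  have "M = (int n + t) * int \<alpha> + (v * c + k * \<alpha>') * int \<beta>"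
    unfolding xy using k a' b' by (simp add: algebra_simps)
  moreover have "\<beta>' = int (\<beta> div gcd \<alpha> \<beta>)"
  proof -
    have "\<beta>' = int \<beta> div g" using b' \<open>g > 0\<close> by simp
    then show ?thesis by (simp add: g_def zdiv_int)
  qed
  ultimately show ?thesis using t that[of "nat t" "v * c + k * \<alpha>'"] by simp
qed

lemma window_coeff_bound:
  fixes \<alpha> \<beta> t j0 :: nat and a B n q :: real
  assumes "\<beta> > 0" "a > 0" "t \<le> \<beta>"
    and "B \<ge> real \<beta> ^ 2 * (real \<alpha> + a * (1 + real \<beta>)) + real \<beta>"
    and "q * real \<beta> + (n + real t) * real \<alpha> \<ge> n * real \<alpha> + real j0 * real \<beta> + B"
  shows "q \<ge> real j0 + a * real t"
proof -
  have "real t \<le> real \<beta> * real \<beta>"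
    using assms(1,3) by (metis le_square of_nat_le_iff of_nat_mult order.trans)
  then have "real t * real \<alpha> \<le> real \<beta> ^ 2 * real \<alpha>"
    by (intro mult_right_mono) (auto simp: power2_eq_square)
  moreover have "a * real t * real \<beta> \<le> real \<beta> ^ 2 * (a * (1 + real \<beta>))"
  proof -
    have "a * real t * real \<beta> \<le> a * real \<beta> * real \<beta>"
      using assms(2,3) by (intro mult_right_mono) auto
    also have "\<dots> \<le> real \<beta> ^ 2 * (a * (1 + real \<beta>))"
      using assms(2) by (simp add: power2_eq_square algebra_simps)
    finally show ?thesis .
  qed
  ultimately have "(real j0 + a * real t) * real \<beta> \<le> q * real \<beta>"
    using assms(4,5) by (simp add: algebra_simps)
  then show ?thesis using assms(1) by simp
qed

theorem mainTheorem18: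
  fixes \<alpha> \<beta> :: nat and a b B :: real and n :: nat and M :: int
  assumes "\<alpha> > 0" "\<beta> > 0" "a > 0"
    and "B \<ge> real \<beta> ^ 2 * (real \<alpha> + a * (1 + real \<beta>)) + real \<beta>"
    and "int (gcd \<alpha> \<beta>) dvd M"
    and "real_of_int M \<ge> real_of_int (Inf (Sset \<alpha> \<beta> a b n)) + B"
  shows "\<exists>i::nat. n \<le> i \<and> i < n + \<beta> * (\<beta> + 1) \<and> M \<in> Sset \<alpha> \<beta> a b i"
proof -
  obtain j0 where j0: "real j0 > a * real n + b"
    and Inf: "Inf (Sset \<alpha> \<beta> a b n) = int n * int \<alpha> + int j0 * int \<beta>"
    by (rule Inf_Sset)
  obtain t q where t: "t < \<beta> div gcd \<alpha> \<beta>" and M: "M = int (n + t) * int \<alpha> + q * int \<beta>"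
    using lincomb_first_coeff_in_window[OF assms(2,5)] .
  have t_le: "t < \<beta>" using t div_le_dividend order.strict_trans2 by blast
  have "real_of_int q \<ge> real j0 + a * real t"
    using assms(6) unfolding Inf M
    by (intro window_coeff_bound[OF assms(2,3) less_imp_le[OF t_le] assms(4), where n = "real n"])
      (simp add: algebra_simps)
  moreover have "0 \<le> real j0 + a * real t" using assms(3) by simp
  ultimately have q: "q \<ge> 0" "real (nat q) > a * real (n + t) + b"
    using j0 by (simp_all add: algebra_simps)
  have "M \<in> Sset \<alpha> \<beta> a b (n + t)"
    unfolding Sset_def using M q by (intro CollectI exI[of _ "nat q"]) simp
  moreover have "n + t < n + \<beta> * (\<beta> + 1)" using t_le by (simp add: trans_less_add1)
  ultimately show ?thesis by (intro exI[of _ "n + t"]) simp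
qed

end
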